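(* Let $\ell$ be an odd prime, $\zeta_\ell$ a primitive $\ell$-th root of unity, $p\in\mathbb{P}$, and $\mathfrak{p}$ a prime ideal of $\mathbb{Z}[\zeta_\ell]$ lying above $p$. For every positive real number $T$, the cardinality of $\{d\in\mathbb{N}: d<T \text{ and } \mathfrak{p}^2\mid d-\zeta_\ell\}$ is at most $T/p^2+1$.
   Context: $\Phi_\ell(X)$ denotes the $\ell$-th cyclotomic polynomial, and $\mathbb{P}$ denotes the set of primes $p$ that divide $\Phi_\ell(d)$ for some $d\in\mathbb{N}$. *)

theory Defs
  imports "HOL-Analysis.Analysis" "HOL-Computational_Algebra.Computational_Algebra"
begin

definition cyclotomic_poly :: "nat \<Rightarrow> complex poly" where
  "cyclotomic_poly n =
     (\<Prod>k\<in>{k. k < n \<and> coprime k n}. [:- exp (2 * pi * \<i> * of_nat k / of_nat n), 1:])"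

definition cyclo_primes :: "nat \<Rightarrow> nat set" where
  "cyclo_primes l = {p. prime p \<and>
     (\<exists>d::nat. \<exists>m::int. poly (cyclotomic_poly l) (of_nat d) = of_int (int p * m))}"

definition primitive_root_unity :: "nat \<Rightarrow> complex \<Rightarrow> bool" where
  "primitive_root_unity l z \<longleftrightarrow> 0 < l \<and> z ^ l = 1 \<and> (\<forall>k. 0 < k \<and> k < l \<longrightarrow> z ^ k \<noteq> 1)"

definition int_adjoin :: "complex \<Rightarrow> complex set" where
  "int_adjoin z = {poly (map_poly of_int f) z | f :: int poly. True}"

definition is_ideal_in :: "complex set \<Rightarrow> complex set \<Rightarrow> bool" where
  "is_ideal_in R I \<longleftrightarrow> I \<subseteq> R \<and> 0 \<in> I \<and>
     (\<forall>x\<in>I. \<forall>y\<in>I. x + y \<in> I) \<and> (\<forall>x\<in>I. - x \<in> I) \<and>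
     (\<forall>r\<in>R. \<forall>x\<in>I. r * x \<in> I)"

definition is_prime_ideal_in :: "complex set \<Rightarrow> complex set \<Rightarrow> bool" where
  "is_prime_ideal_in R I \<longleftrightarrow> is_ideal_in R I \<and> I \<noteq> R \<and>
     (\<forall>a\<in>R. \<forall>b\<in>R. a * b \<in> I \<longrightarrow> a \<in> I \<or> b \<in> I)"

definition cideal_prod :: "complex set \<Rightarrow> complex set \<Rightarrow> complex set" where
  "cideal_prod I J = {(\<Sum>i<n. a i * b i) | (n::nat) a b. (\<forall>i<n. a i \<in> I \<and> b i \<in> J)}"

definition lies_above :: "complex set \<Rightarrow> nat \<Rightarrow> bool" where
  "lies_above I p \<longleftrightarrow> {k::int. of_int k \<in> I} = {k. int p dvd k}"

end

theory Submission
  imports Defs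
begin

(* Fix d with d - zeta in P^2 and put v = zeta - d. Every element of Z[zeta] is an integer
   modulo v and P meets Z in pZ, so P is generated by p and v, and P^2 lies in Q = pP + vP.
   The ideal Q contains v and p^2 but not p, since P is proper; hence Q meets Z in p^2 Z.
   So all natural numbers d with d - zeta in P^2 lie in one residue class modulo p^2, and at
   most T / p^2 + 1 members of such a class lie below T. *)

lemma mem_elt_set_times_plus_iff:
  "x \<in> a *o A + b *o B \<longleftrightarrow> (\<exists>u\<in>A. \<exists>w\<in>B. x = a * u + b * w)"
  by (auto simp: set_plus_def elt_set_times_def)

lemma sum_mem_ideal:
  assumes "is_ideal_in R I" and "finite A" and "\<forall>i\<in>A. x i \<in> I"
  shows "(\<Sum>i\<in>A. x i) \<in> I"
  using assms(2,3)
proof (induction A rule: finite_induct)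
  case empty
  then show ?case using assms(1) unfolding is_ideal_in_def by simp
next
  case (insert i A)
  then show ?case using assms(1) unfolding is_ideal_in_def by simp
qed

lemma cideal_prod_subset_right:
  assumes "is_ideal_in R J" and "I \<subseteq> R"
  shows "cideal_prod I J \<subseteq> J"
proof
  fix x assume "x \<in> cideal_prod I J"
  then obtain n :: nat and a b :: "nat \<Rightarrow> complex" where
    x: "x = (\<Sum>i<n. a i * b i)" and ab: "\<forall>i<n. a i \<in> I \<and> b i \<in> J"
    unfolding cideal_prod_def by blast
  have "\<forall>i\<in>{..<n}. a i * b i \<in> J"
    using ab assms unfolding is_ideal_in_def by blast
  then show "x \<in> J"
    unfolding x by (intro sum_mem_ideal[OF assms(1)]) auto
qed

lemma elt_set_times_plus_subset_ideal:
  assumes "is_ideal_in R P" and "a \<in> R" and "b \<in> R"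
  shows "a *o P + b *o P \<subseteq> P"
  using assms unfolding is_ideal_in_def by (auto simp: mem_elt_set_times_plus_iff)

lemma is_ideal_in_elt_set_times_plus:
  assumes "is_ideal_in R P" and "a \<in> R" and "b \<in> R"
  shows "is_ideal_in R (a *o P + b *o P)"
proof -
  have "x + y \<in> a *o P + b *o P" if "x \<in> a *o P + b *o P" "y \<in> a *o P + b *o P" for x y
  proof -
    from that obtain u w u' w' where "u \<in> P" "w \<in> P" "u' \<in> P" "w' \<in> P"
      and "x = a * u + b * w" "y = a * u' + b * w'"
      by (auto simp: mem_elt_set_times_plus_iff)
    moreover have "x + y = a * (u + u') + b * (w + w')"
      using calculation by (simp add: algebra_simps)
    ultimately show ?thesis
      using assms(1) unfolding is_ideal_in_def mem_elt_set_times_plus_iff by blast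
  qed
  moreover have "- x \<in> a *o P + b *o P" if "x \<in> a *o P + b *o P" for x
  proof -
    from that obtain u w where "u \<in> P" "w \<in> P" "x = a * u + b * w"
      by (auto simp: mem_elt_set_times_plus_iff)
    moreover have "- x = a * - u + b * - w"
      using calculation by simp
    ultimately show ?thesis
      using assms(1) unfolding is_ideal_in_def mem_elt_set_times_plus_iff by blast
  qed
  moreover have "r * x \<in> a *o P + b *o P" if "r \<in> R" "x \<in> a *o P + b *o P" for r x
  proof -
    from that obtain u w where "u \<in> P" "w \<in> P" "x = a * u + b * w"
      by (auto simp: mem_elt_set_times_plus_iff)
    moreover have "r * x = a * (r * u) + b * (r * w)"
      using calculation by (simp add: algebra_simps)
    ultimately show ?thesis
      using assms(1) \<open>r \<in> R\<close> unfolding is_ideal_in_def mem_elt_set_times_plus_iff by blast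
  qed
  moreover have "0 = a * 0 + b * (0::complex)"
    by simp
  then have "0 \<in> a *o P + b *o P"
    using assms(1) unfolding is_ideal_in_def mem_elt_set_times_plus_iff by blast
  moreover have "a *o P + b *o P \<subseteq> R"
    using elt_set_times_plus_subset_ideal[OF assms] assms(1) unfolding is_ideal_in_def by blast
  ultimately show ?thesis
    unfolding is_ideal_in_def by blast
qed

lemma cideal_prod_subset_elt_set_times_plus:
  assumes P: "is_ideal_in R P" and "a \<in> R" and "b \<in> R"
    and gen: "P \<subseteq> a *o R + b *o R"
  shows "cideal_prod P P \<subseteq> a *o P + b *o P"
proof
  fix x assume "x \<in> cideal_prod P P"
  then obtain n :: nat and c e :: "nat \<Rightarrow> complex" where
    x: "x = (\<Sum>i<n. c i * e i)" and ce: "\<forall>i<n. c i \<in> P \<and> e i \<in> P"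
    unfolding cideal_prod_def by blast
  have "c i * e i \<in> a *o P + b *o P" if "i < n" for i
  proof -
    have "c i \<in> a *o R + b *o R"
      using gen ce \<open>i < n\<close> by blast
    then obtain r s where "r \<in> R" "s \<in> R" "c i = a * r + b * s"
      unfolding mem_elt_set_times_plus_iff by blast
    moreover have "c i * e i = a * (r * e i) + b * (s * e i)"
      using calculation by (simp add: algebra_simps)
    ultimately show ?thesis
      using P ce \<open>i < n\<close> unfolding is_ideal_in_def mem_elt_set_times_plus_iff by blast
  qed
  then show "x \<in> a *o P + b *o P"
    unfolding x by (intro sum_mem_ideal[OF is_ideal_in_elt_set_times_plus[OF assms(1-3)]]) auto
qed

text \<open>If a = a u + b w and b = a u' + b w' with all coefficients in P, the determinant
  (1 - u) (1 - w') - u' w vanishes, which puts 1 into P.\<close>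
lemma not_mem_elt_set_times_plus:
  assumes P: "is_ideal_in R P" and "P \<noteq> R" and "a \<noteq> 0" and "b \<noteq> 0"
    and "b \<in> a *o P + b *o P"
  shows "a \<notin> a *o P + b *o P"
proof
  assume "a \<in> a *o P + b *o P"
  then obtain u w where uw: "u \<in> P" "w \<in> P" "a = a * u + b * w"
    by (auto simp: mem_elt_set_times_plus_iff)
  obtain u' w' where uw': "u' \<in> P" "w' \<in> P" "b = a * u' + b * w'"
    using assms(5) by (auto simp: mem_elt_set_times_plus_iff)
  have "((1 - u) * (1 - w') - u' * w) * (a * b) = 0"
    using uw(3) uw'(3) by algebra
  then have "(1 - u) * (1 - w') = u' * w"
    using \<open>a \<noteq> 0\<close> \<open>b \<noteq> 0\<close> by simp
  then have "1 = u + w' + - (u * w') + u' * w"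
    by (simp add: algebra_simps)
  also have "\<dots> \<in> P"
    using P uw uw' unfolding is_ideal_in_def by (meson subsetD)
  finally have "1 \<in> P" .
  then have "R \<subseteq> P"
    using P unfolding is_ideal_in_def by (metis mult.right_neutral subsetI)
  then show False
    using P \<open>P \<noteq> R\<close> unfolding is_ideal_in_def by blast
qed

lemma int_mem_ideal_sq_dvd:
  fixes p n :: int
  assumes Q: "is_ideal_in R Q" and ints: "\<And>k. of_int k \<in> R" and "prime p"
    and "of_int p \<notin> Q" and "of_int (p ^ 2) \<in> Q" and dvd: "\<And>k. of_int k \<in> Q \<Longrightarrow> p dvd k"
    and n: "of_int n \<in> Q"
  shows "p ^ 2 dvd n"
proof (rule ccontr)
  assume "\<not> p ^ 2 dvd n"
  obtain m where m: "n = p * m"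
    using dvd[OF n] by blast
  have "\<not> p dvd m"
    using \<open>\<not> p ^ 2 dvd n\<close> m by (auto simp: power2_eq_square)
  then have "coprime p m"
    using \<open>prime p\<close> by (simp add: prime_imp_coprime)
  then obtain s t where "s * p + t * m = 1"
    by (metis bezout_int coprime_iff_gcd_eq_1)
  then have "p = t * n + s * p ^ 2"
    using m by algebra
  then have "(of_int p :: complex) = of_int t * of_int n + of_int s * of_int (p ^ 2)"
    by (metis of_int_add of_int_mult)
  also have "\<dots> \<in> Q"
    using Q ints n \<open>of_int (p ^ 2) \<in> Q\<close> unfolding is_ideal_in_def by blast
  finally have "of_int p \<in> Q" .
  with \<open>of_int p \<notin> Q\<close> show False ..
qed

lemma poly_of_int_eq_linear_mult_plus:
  fixes f :: "int poly" and z :: complex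
  shows "\<exists>g. poly (map_poly of_int f) z = (z - of_int c) * poly (map_poly of_int g) z + of_int (poly f c)"
proof (induction f rule: pCons_induct)
  case 0
  show ?case by (intro exI[of _ 0]) simp
next
  case (pCons a f)
  then obtain g where g:
    "poly (map_poly of_int f) z = (z - of_int c) * poly (map_poly of_int g) z + of_int (poly f c)"
    by blast
  show ?case
    by (intro exI[of _ "pCons (poly f c) g"]) (simp add: map_poly_pCons g algebra_simps)
qed

lemma of_int_mem_int_adjoin: "of_int k \<in> int_adjoin z"
  unfolding int_adjoin_def by (intro CollectI exI[of _ "[:k:]"]) (simp add: map_poly_pCons)

lemma int_adjoin_eq_linear_mult_plus:
  assumes "x \<in> int_adjoin z"
  obtains g k where "g \<in> int_adjoin z" and "x = (z - of_int c) * g + of_int k"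
proof -
  obtain f where "x = poly (map_poly of_int f) z"
    using assms unfolding int_adjoin_def by blast
  with poly_of_int_eq_linear_mult_plus[of f z c] that show ?thesis
    unfolding int_adjoin_def by blast
qed

lemma int_adjoin_ideal_subset_elt_set_times_plus:
  assumes P: "is_ideal_in (int_adjoin z) P" and "lies_above P p" and v: "z - of_int c \<in> P"
  shows "P \<subseteq> of_nat p *o int_adjoin z + (z - of_int c) *o int_adjoin z"
proof
  fix x assume "x \<in> P"
  then obtain g k where g: "g \<in> int_adjoin z" and x: "x = (z - of_int c) * g + of_int k"
    using P unfolding is_ideal_in_def by (meson subsetD int_adjoin_eq_linear_mult_plus)
  have "(z - of_int c) * g \<in> P"
    using P g v unfolding is_ideal_in_def by (metis mult.commute)
  then have "of_int k \<in> P"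
    using P \<open>x \<in> P\<close> unfolding is_ideal_in_def x by (metis add_diff_cancel_left' diff_conv_add_uminus)
  then obtain m where "k = int p * m"
    using \<open>lies_above P p\<close> unfolding lies_above_def by blast
  then have "x = of_nat p * of_int m + (z - of_int c) * g"
    using x by simp
  then show "x \<in> of_nat p *o int_adjoin z + (z - of_int c) *o int_adjoin z"
    using g of_int_mem_int_adjoin unfolding mem_elt_set_times_plus_iff by blast
qed

lemma prime_sq_dvd_diff_of_mem_cideal_prod:
  fixes d d' :: int
  assumes P: "is_ideal_in (int_adjoin z) P" and "P \<noteq> int_adjoin z"
    and "lies_above P p" and "prime p" and "z \<notin> \<int>"
    and d: "of_int d - z \<in> cideal_prod P P" and d': "of_int d' - z \<in> cideal_prod P P"
  shows "int p ^ 2 dvd d - d'"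
proof -
  define v where "v = z - of_int d"
  define Q where "Q = of_nat p *o P + v *o P"
  have P_closed: "\<And>x. x \<in> P \<Longrightarrow> - x \<in> P" "P \<subseteq> int_adjoin z"
    using P unfolding is_ideal_in_def by blast+
  have lies: "\<And>k. of_int k \<in> P \<longleftrightarrow> int p dvd k"
    using \<open>lies_above P p\<close> unfolding lies_above_def by blast
  have p_mem: "of_nat p \<in> int_adjoin z" "of_nat p \<in> P"
    using of_int_mem_int_adjoin[of "int p" z] lies[of "int p"] by auto
  have "cideal_prod P P \<subseteq> P"
    using P P_closed(2) by (rule cideal_prod_subset_right)
  then have "v \<in> P"
    using d P_closed(1) unfolding v_def by force
  have "v \<noteq> 0" "of_nat p \<noteq> (0::complex)"
    using \<open>z \<notin> \<int>\<close> \<open>prime p\<close> unfolding v_def by auto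
  have Q: "is_ideal_in (int_adjoin z) Q"
    unfolding Q_def using p_mem \<open>v \<in> P\<close> P_closed(2)
    by (intro is_ideal_in_elt_set_times_plus[OF P]) auto
  have "Q \<subseteq> P"
    unfolding Q_def using p_mem \<open>v \<in> P\<close> P_closed(2)
    by (intro elt_set_times_plus_subset_ideal[OF P]) auto
  have "P \<subseteq> of_nat p *o int_adjoin z + v *o int_adjoin z"
    using int_adjoin_ideal_subset_elt_set_times_plus[OF P \<open>lies_above P p\<close>] \<open>v \<in> P\<close>
    unfolding v_def by blast
  then have "cideal_prod P P \<subseteq> Q"
    unfolding Q_def using p_mem \<open>v \<in> P\<close> P_closed(2)
    by (intro cideal_prod_subset_elt_set_times_plus[OF P]) auto
  then have d_mem: "of_int d - z \<in> Q" and "of_int d' - z \<in> Q"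
    using d d' by blast+
  have Q_diff: "x - y \<in> Q" if "x \<in> Q" "y \<in> Q" for x y
    using Q that unfolding is_ideal_in_def by (metis diff_conv_add_uminus)
  have "v \<in> Q"
    using Q d_mem unfolding is_ideal_in_def v_def by (metis minus_diff_eq)
  then have "of_nat p \<notin> Q"
    unfolding Q_def
    by (intro not_mem_elt_set_times_plus[OF P] \<open>P \<noteq> int_adjoin z\<close> \<open>v \<noteq> 0\<close>
        \<open>of_nat p \<noteq> 0\<close>)
  have "of_nat p * of_nat p + v * 0 \<in> Q"
    unfolding Q_def mem_elt_set_times_plus_iff using p_mem P unfolding is_ideal_in_def by blast
  then have "of_int (int p ^ 2) \<in> Q"
    by (simp add: power2_eq_square)
  moreover have "of_int (d - d') \<in> Q"
    using Q_diff[OF d_mem \<open>of_int d' - z \<in> Q\<close>] by simp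
  moreover have "int p dvd k" if "of_int k \<in> Q" for k
    using that \<open>Q \<subseteq> P\<close> lies by blast
  ultimately show ?thesis
    using int_mem_ideal_sq_dvd[OF Q of_int_mem_int_adjoin, of "int p"] \<open>prime p\<close> \<open>of_nat p \<notin> Q\<close>
    by simp
qed

lemma card_less_same_mod_le:
  fixes S :: "nat set" and T :: real
  assumes "m > 0" and "0 \<le> T" and less: "\<forall>d\<in>S. real d < T"
    and same_mod: "\<forall>d\<in>S. \<forall>d'\<in>S. d mod m = d' mod m"
  shows "real (card S) \<le> T / m + 1"
proof -
  have "inj_on (\<lambda>d. d div m) S"
    using same_mod by (intro inj_onI) (metis div_mult_mod_eq)
  moreover have "(\<lambda>d. d div m) ` S \<subseteq> {..< nat \<lceil>T / m\<rceil>}"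
  proof
    fix k assume "k \<in> (\<lambda>d. d div m) ` S"
    then obtain d where "d \<in> S" "k = d div m"
      by blast
    then have "real k * real m \<le> real d"
      by (metis div_times_less_eq_dividend of_nat_le_iff of_nat_mult)
    also have "\<dots> < T"
      using less \<open>d \<in> S\<close> by blast
    finally have "real k < T / m"
      using \<open>m > 0\<close> by (simp add: field_simps)
    then have "int k < \<lceil>T / m\<rceil>"
      by linarith
    then show "k \<in> {..< nat \<lceil>T / m\<rceil>}"
      by simp
  qed
  ultimately have "card S \<le> nat \<lceil>T / m\<rceil>"
    by (metis card_image card_lessThan card_mono finite_lessThan)
  then have "real (card S) \<le> real (nat \<lceil>T / m\<rceil>)"
    by simp
  also have "\<dots> = of_int \<lceil>T / m\<rceil>"
    using \<open>0 \<le> T\<close> by simp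
  also have "\<dots> \<le> T / m + 1"
    by (rule of_int_ceiling_le_add_one)
  finally show ?thesis .
qed

lemma primitive_root_unity_not_Ints:
  assumes "primitive_root_unity l z" and "2 < l"
  shows "z \<notin> \<int>"
proof
  assume "z \<in> \<int>"
  then obtain k where z: "z = of_int k"
    by (auto elim: Ints_cases)
  have "norm z = 1"
    using assms power_eq_1_iff[of z l] unfolding primitive_root_unity_def by auto
  then have "\<bar>k\<bar> = 1"
    unfolding z by simp
  then have "z ^ 2 = 1"
    unfolding z by (metis abs_square_eq_1 of_int_1 of_int_power)
  with assms show False
    unfolding primitive_root_unity_def by auto
qed

theorem lemma2:
  fixes l p :: nat and \<zeta> :: complex and \<pp> :: "complex set" and T :: real
  assumes "prime l" and "odd l"
    and "primitive_root_unity l \<zeta>"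
    and "p \<in> cyclo_primes l"
    and "is_prime_ideal_in (int_adjoin \<zeta>) \<pp>"
    and "lies_above \<pp> p"
    and "T > 0"
  shows "real (card {d::nat. real d < T \<and> of_nat d - \<zeta> \<in> cideal_prod \<pp> \<pp>})
           \<le> T / real p ^ 2 + 1"
proof -
  have "2 < l"
    using assms(1,2) prime_ge_2_nat[of l] by (metis le_neq_implies_less even_numeral)
  have "\<zeta> \<notin> \<int>"
    using primitive_root_unity_not_Ints[OF assms(3) \<open>2 < l\<close>] .
  have "prime p"
    using assms(4) unfolding cyclo_primes_def by blast
  have "is_ideal_in (int_adjoin \<zeta>) \<pp>" "\<pp> \<noteq> int_adjoin \<zeta>"
    using assms(5) unfolding is_prime_ideal_in_def by blast+
  have "int p ^ 2 dvd int d - int d'"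
    if "of_nat d - \<zeta> \<in> cideal_prod \<pp> \<pp>" "of_nat d' - \<zeta> \<in> cideal_prod \<pp> \<pp>" for d d'
    using prime_sq_dvd_diff_of_mem_cideal_prod[OF \<open>is_ideal_in (int_adjoin \<zeta>) \<pp>\<close>
        \<open>\<pp> \<noteq> int_adjoin \<zeta>\<close> assms(6) \<open>prime p\<close> \<open>\<zeta> \<notin> \<int>\<close>, of "int d" "int d'"] that
    by simp
  then have "d mod p ^ 2 = d' mod p ^ 2"
    if "of_nat d - \<zeta> \<in> cideal_prod \<pp> \<pp>" "of_nat d' - \<zeta> \<in> cideal_prod \<pp> \<pp>" for d d'
    using that by (metis mod_eq_dvd_iff of_nat_eq_iff of_nat_power zmod_int)
  then show ?thesis
    using card_less_same_mod_le[of "p ^ 2" T] \<open>prime p\<close> \<open>T > 0\<close> by (simp add: prime_gt_0_nat)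
qed

end
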